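(* Consider the single-input control-affine system $\dot{x} = f(x) + g(x)u$ and a Lipschitz continuous exponential CBF $h$ with relative degree $r<n$ and rates $\gamma_1,\dots,\gamma_r>0$, written in the cascading constraint coordinates as $\dot{\varphi} = A_\gamma \varphi + B\mu$, $\dot{\eta} = q_{\mathrm{cbf}}(\eta,\varphi)$. Let $x_0\in S_\varphi$. Suppose the fixed-virtual-control-input global exponential minimum phase condition holds: there exists $\mu_e\ge0$ such that $\dot\eta = q_{\mathrm{cbf}}(\eta,\Gamma\mu_e)$ has a globally exponentially stable equilibrium $\eta_e$. Then under $\mu(t)\equiv\mu_e$, the trajectory satisfies $(\varphi(t),\eta(t))\to(\Gamma\mu_e,\eta_e)$ as $t\to\infty$. Thus the system under the barrier constraint can stay bounded.
   Context: The system $\dot x = f(x)+g(x)u$ has $f,g:\mathbb{R}^n\to\mathbb{R}^n$ Lipschitz and $u\in\mathbb{R}$. For a scalar function $h$, $L_f$, $L_g$ denote Lie derivatives. $h$ has relative degree $r$ at $x$ if $L_gL_f^k h\equiv 0$ near $x$ for $k=0,\dots,r-2$ and $L_gL_f^{r-1}h(x)\neq 0$. An exponential CBF with relative degree $r$ is $h:\mathbb{R}^n\to\mathbb{R}$ with relative degree $r$ on $\mathcal{C}=\{h\ge 0\}$, $\partial h/\partial x\neq0$ on $\{h=0\}$, and $\sup_{u}[L_f^r h(x)+L_gL_f^{r-1}h(x)u+k^\top\xi(x)]\ge 0$ on $\mathcal{C}$, where $\xi=[h,L_fh,\dots,L_f^{r-1}h]^\top$ and $s^r+k_rs^{r-1}+\dots+k_1=(s+\gamma_1)\cdots(s+\gamma_r)$,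 $\gamma_i>0$. Virtual control input: $\mu(x,u)=L_f^rh+L_gL_f^{r-1}h\,u+k^\top\xi$; barrier constraint: $\mu\ge0$. Cascading constraint vector: $\varphi_1=h$, $\varphi_{i+1}=\dot\varphi_i+\gamma_i\varphi_i$; $S_\varphi=\{x:\varphi(x)\in\mathbb{R}^r_{\ge0}\}$. $A_\gamma$ is the $r\times r$ upper bidiagonal matrix with diagonal $-\gamma_1,\dots,-\gamma_r$ and superdiagonal entries $1$; $B=[0,\dots,0,1]^\top$; $\Gamma=-A_\gamma^{-1}B=[(\gamma_1\cdots\gamma_r)^{-1},(\gamma_2\cdots\gamma_r)^{-1},\dots,\gamma_r^{-1}]^\top$. The internal state $\eta\in\mathbb{R}^{n-r}$ is chosen so that $x\mapsto(\varphi,\eta)$ is a diffeomorphism and $L_g\eta_j\equiv 0$; then $\dot\varphi=A_\gamma\varphi+B\mu$, $\dot\eta=q_{\mathrm{cbf}}(\eta,\varphi)$ with $q_{\mathrm{cbf}}$ Lipschitz in $\eta$ and $\varphi$. Any signal $\mu(t)$ can be realized by a choice of $u$. *)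

theory Defs
  imports "HOL-Analysis.Analysis"
begin

text \<open>Vectors in R^r are represented as functions nat => real, only the
components 0..r-1 being meaningful; r x r matrices as nat => nat => real.
Indices are 0-based: gamma 0, ..., gamma (r-1) correspond to gamma_1..gamma_r.\<close>

definition matvec :: "nat \<Rightarrow> (nat \<Rightarrow> nat \<Rightarrow> real) \<Rightarrow> (nat \<Rightarrow> real) \<Rightarrow> nat \<Rightarrow> real" where
  "matvec r A v i = (\<Sum>j<r. A i j * v j)"

definition A_gamma :: "nat \<Rightarrow> (nat \<Rightarrow> real) \<Rightarrow> nat \<Rightarrow> nat \<Rightarrow> real" where
  "A_gamma r \<gamma> i j = (if i < r \<and> j < r then
      (if i = j then - \<gamma> i else if j = Suc i then 1 else 0) else 0)"

definition B_vec :: "nat \<Rightarrow> nat \<Rightarrow> real" where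
  "B_vec r i = (if i = r - 1 then 1 else 0)"

text \<open>Gamma = - A_gamma^{-1} B, i.e. the unique vector v (supported on 0..r-1)
  with A_gamma v + B = 0.\<close>
definition Gamma_vec :: "nat \<Rightarrow> (nat \<Rightarrow> real) \<Rightarrow> nat \<Rightarrow> real" where
  "Gamma_vec r \<gamma> = (THE v. (\<forall>i<r. matvec r (A_gamma r \<gamma>) v i + B_vec r i = 0)
                            \<and> (\<forall>i\<ge>r. v i = 0))"

definition dist_r :: "nat \<Rightarrow> (nat \<Rightarrow> real) \<Rightarrow> (nat \<Rightarrow> real) \<Rightarrow> real" where
  "dist_r r v w = sqrt (\<Sum>i<r. (v i - w i)^2)"

definition scale_r :: "real \<Rightarrow> (nat \<Rightarrow> real) \<Rightarrow> nat \<Rightarrow> real" where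
  "scale_r c v = (\<lambda>i. c * v i)"

definition lipschitz_cbf :: "nat \<Rightarrow> ('e::real_normed_vector \<Rightarrow> (nat \<Rightarrow> real) \<Rightarrow> 'e) \<Rightarrow> bool" where
  "lipschitz_cbf r q \<longleftrightarrow> (\<exists>L. \<forall>\<eta> \<eta>' \<phi> \<phi>'.
      norm (q \<eta> \<phi> - q \<eta>' \<phi>') \<le> L * (norm (\<eta> - \<eta>') + dist_r r \<phi> \<phi>'))"

definition glob_exp_stable_eq :: "('e::real_normed_vector \<Rightarrow> 'e) \<Rightarrow> 'e \<Rightarrow> bool" where
  "glob_exp_stable_eq F \<eta>e \<longleftrightarrow> F \<eta>e = 0 \<and>
     (\<exists>M k. M > 0 \<and> k > 0 \<and>
        (\<forall>\<zeta>. (\<forall>t\<ge>0. (\<zeta> has_vector_derivative F (\<zeta> t)) (at t within {0..})) \<longrightarrow>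
             (\<forall>t\<ge>0. norm (\<zeta> t - \<eta>e) \<le> M * exp (- k * t) * norm (\<zeta> 0 - \<eta>e))))"

end

theory Submission
  imports Defs
begin

text \<open>The \<open>\<phi>\<close>-subsystem is a cascade of stable scalar equations
  \<open>\<phi>\<^sub>i' = - \<gamma>\<^sub>i \<phi>\<^sub>i + (\<phi>\<^sub>i\<^sub>+\<^sub>1 or \<mu>\<^sub>e)\<close>; going backwards from the last component, each
  input converges, hence so does each \<open>\<phi>\<^sub>i\<close>, and the limits are \<open>\<mu>\<^sub>e \<Gamma>\<close> by the defining
  equation \<open>A\<^sub>\<gamma> \<Gamma> + B = 0\<close>. The \<open>\<eta>\<close>-subsystem is the globally exponentially stable system
  \<open>\<eta>' = q \<eta> (\<mu>\<^sub>e \<Gamma>)\<close> perturbed by \<open>q \<eta> \<phi> - q \<eta> (\<mu>\<^sub>e \<Gamma>)\<close>, which tends to zero by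
  Lipschitz continuity. Comparing \<open>\<eta>\<close> on windows of a fixed length \<open>T\<close> with the unperturbed
  solution started at the same point (it exists globally by a Picard iteration, and Gronwall
  bounds the deviation by a multiple of the perturbation), the distance to \<open>\<eta>\<^sub>e\<close> is at least
  halved on each window up to an error that vanishes with the perturbation, so \<open>\<eta> \<rightarrow> \<eta>\<^sub>e\<close>.
  The scalar equations of the cascade are a special case of the same converging-input
  converging-state argument.\<close>

lemma exp_weighted_norm_integral_le:
  fixes g :: "real \<Rightarrow> 'a::banach"
  assumes c: "c > 0" and u: "u \<ge> 0" and A: "A \<ge> 0" and B: "B \<ge> 0"
    and g: "g integrable_on {0..u}"
    and bound: "\<And>s. s \<in> {0..u} \<Longrightarrow> norm (g s) \<le> A + B * exp (c * s)"
  shows "exp (- c * u) * norm (integral {0..u} g) \<le> (A + B) / c"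
proof -
  have "A * u + B * (exp (c * u) - 1) / c
      = (A * u + B * exp (c * u) / c) - (A * 0 + B * exp (c * 0) / c)"
    by (simp add: right_diff_distrib diff_divide_distrib)
  also have "((\<lambda>s. A + B * exp (c * s)) has_integral \<dots>) {0..u}"
    using u c by (intro fundamental_theorem_of_calculus)
      (auto simp flip: has_real_derivative_iff_has_vector_derivative intro!: derivative_eq_intros)
  finally have bound_integral:
    "((\<lambda>s. A + B * exp (c * s)) has_integral A * u + B * (exp (c * u) - 1) / c) {0..u}" .
  have "norm (integral {0..u} g) \<le> A * u + B * (exp (c * u) - 1) / c"
    using integral_norm_bound_integral[OF g has_integral_integrable[OF bound_integral] bound]
    by (simp add: integral_unique[OF bound_integral])
  then have "exp (- c * u) * norm (integral {0..u} g)
      \<le> exp (- c * u) * (A * u + B * (exp (c * u) - 1) / c)"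
    by (simp add: mult_left_mono)
  also have "\<dots> = A * (exp (- c * u) * u) + B / c * (1 - exp (- c * u))"
  proof -
    have "exp (- c * u) * exp (c * u) = 1" by (simp add: exp_minus)
    then show ?thesis by (simp add: algebra_simps diff_divide_distrib)
  qed
  also have "\<dots> \<le> A * (1 / c) + B / c * 1"
  proof (intro add_mono mult_left_mono)
    have "c * u \<le> exp (c * u)" using exp_ge_add_one_self[of "c * u"] by linarith
    then show "exp (- c * u) * u \<le> 1 / c" using c by (simp add: exp_minus field_simps)
  qed (use A B c in auto)
  finally show ?thesis by (simp add: add_divide_distrib)
qed

lemma gronwall_norm_le:
  fixes e e' :: "real \<Rightarrow> 'a::banach"
  assumes L: "L > 0" and e0: "e 0 = 0"
    and e': "\<And>s. s \<in> {0..T} \<Longrightarrow> (e has_vector_derivative e' s) (at s within {0..T})"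
    and growth: "\<And>s. s \<in> {0..T} \<Longrightarrow> norm (e' s) \<le> L * norm (e s) + D"
    and s: "s \<in> {0..T}"
  shows "norm (e s) \<le> D / L * exp (2 * L * T)"
proof -
  have D: "D \<ge> 0"
    using growth[of 0] s e0 norm_ge_zero[of "e' 0"] by (simp del: norm_ge_zero)
  have "continuous_on {0..T} e"
    using e' continuous_on_eq_continuous_within has_vector_derivative_continuous by blast
  then have weighted_cont: "continuous_on {0..T} (\<lambda>x. exp (- (2 * L) * x) * norm (e x))"
    by (intro continuous_intros)
  obtain s0 where s0: "s0 \<in> {0..T}"
    and s0_max: "\<And>x. x \<in> {0..T} \<Longrightarrow> exp (- (2 * L) * x) * norm (e x) \<le> exp (- (2 * L) * s0) * norm (e s0)"
    using continuous_attains_sup[OF compact_Icc _ weighted_cont] s by auto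
  define m where "m = exp (- (2 * L) * s0) * norm (e s0)"
  \<comment> \<open>Integrating the growth bound up to the maximiser \<open>s0\<close> gives \<open>m \<le> D / (2 * L) + m / 2\<close>.\<close>
  have m: "m \<ge> 0" by (simp add: m_def)
  have e_le: "norm (e x) \<le> m * exp (2 * L * x)" if "x \<in> {0..T}" for x
  proof -
    have "norm (e x) = exp (2 * L * x) * (exp (- (2 * L) * x) * norm (e x))"
      by (simp add: mult.assoc[symmetric] exp_minus_inverse)
    also have "\<dots> \<le> exp (2 * L * x) * m"
      using s0_max[OF that] by (simp add: m_def)
    finally show ?thesis by (simp add: mult.commute)
  qed
  have "(e' has_integral e s0 - e 0) {0..s0}"
    using s0 by (intro fundamental_theorem_of_calculus)
      (auto intro: has_vector_derivative_within_subset[OF e'])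
  then have "m = exp (- (2 * L) * s0) * norm (integral {0..s0} e')"
    by (simp add: integral_unique e0 m_def)
  also have "\<dots> \<le> (D + L * m) / (2 * L)"
  proof (rule exp_weighted_norm_integral_le)
    show "e' integrable_on {0..s0}"
      using \<open>(e' has_integral e s0 - e 0) {0..s0}\<close> by blast
    fix x assume x: "x \<in> {0..s0}"
    then have "x \<in> {0..T}" using s0 by auto
    then have "norm (e' x) \<le> L * (m * exp (2 * L * x)) + D"
      using growth[of x] e_le[of x] L by (smt (verit) mult_left_mono)
    then show "norm (e' x) \<le> D + L * m * exp (2 * L * x)"
      by (simp add: algebra_simps)
  qed (use L D m s0 in auto)
  finally have "m * (2 * L) \<le> D + L * m"
    using L by (simp add: le_divide_eq)
  then have "m \<le> D / L"
    using L by (simp add: le_divide_eq algebra_simps)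
  then have "m * exp (2 * L * s) \<le> D / L * exp (2 * L * T)"
    using s L D by (intro mult_mono) auto
  then show ?thesis
    using e_le[OF s] by linarith
qed

lemma integral_has_vector_derivative_atLeast:
  fixes g :: "real \<Rightarrow> 'a::banach"
  assumes "continuous_on {a..} g" and "x \<ge> a"
  shows "((\<lambda>u. integral {a..u} g) has_vector_derivative g x) (at x within {a..})"
proof -
  have "((\<lambda>u. integral {a..u} g) has_vector_derivative g x) (at x within {a..x + 1})"
    using assms by (intro integral_has_vector_derivative) (auto intro: continuous_on_subset)
  moreover have "at x within {a..x + 1} = at x within {a..}"
    by (rule at_within_nhd[where S = "{x - 1 <..< x + 1}"]) auto
  ultimately show ?thesis by simp
qed

lemma has_vector_derivative_shift_within:
  fixes f :: "real \<Rightarrow> 'a::real_normed_vector"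
  assumes "(f has_vector_derivative f') (at (a + x) within (\<lambda>x. a + x) ` S)"
  shows "((\<lambda>x. f (a + x)) has_vector_derivative f') (at x within S)"
proof -
  have "((\<lambda>x. a + x) has_vector_derivative 1) (at x within S)"
    by (auto intro!: derivative_eq_intros)
  from vector_diff_chain_within[OF this assms] show ?thesis
    by (simp add: o_def)
qed

text \<open>The integral form of \<open>\<zeta>' = F \<zeta>, \<zeta> 0 = z\<close> for the rescaled unknown
  \<open>y t = exp (- c * t) *\<^sub>R \<zeta> t\<close>, extended constantly to \<open>t < 0\<close>. For \<open>c = 2 * L\<close> it is a
  contraction of the sup norm (Bielecki's trick), so no smallness of the time interval is needed.\<close>
definition bielecki_picard :: "real \<Rightarrow> ('a::banach \<Rightarrow> 'a) \<Rightarrow> 'a \<Rightarrow> (real \<Rightarrow>\<^sub>C 'a) \<Rightarrow> real \<Rightarrow> 'a"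
  where "bielecki_picard c F z y t =
    exp (- c * max t 0) *\<^sub>R (z + integral {0..max t 0} (\<lambda>s. F (exp (c * s) *\<^sub>R y s)))"

lemma lipschitz_scaleR_bcontfun_diff_le:
  fixes F :: "'a::real_normed_vector \<Rightarrow> 'b::real_normed_vector"
    and y y' :: "'c::topological_space \<Rightarrow>\<^sub>C 'a"
  assumes "L-lipschitz_on UNIV F"
  shows "norm (F (exp a *\<^sub>R apply_bcontfun y s) - F (exp a *\<^sub>R apply_bcontfun y' s)) \<le> L * dist y y' * exp a"
proof -
  have "norm (F (exp a *\<^sub>R y s) - F (exp a *\<^sub>R y' s)) \<le> L * norm (exp a *\<^sub>R y s - exp a *\<^sub>R y' s)"
    using lipschitz_onD[OF assms] by (simp add: dist_norm)
  also have "\<dots> = L * exp a * dist (y s) (y' s)"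
    by (simp add: dist_norm flip: scaleR_diff_right)
  also have "\<dots> \<le> L * exp a * dist y y'"
    using lipschitz_on_nonneg[OF assms] by (simp add: dist_bounded mult_left_mono)
  finally show ?thesis by (simp add: mult_ac)
qed

lemma continuous_on_bielecki_picard:
  fixes F :: "'a::banach \<Rightarrow> 'a"
  assumes "continuous_on UNIV F"
  shows "continuous_on UNIV (bielecki_picard c F z y)"
proof -
  define G where "G s = F (exp (c * s) *\<^sub>R y s)" for s
  have G: "continuous_on {0..} G"
    unfolding G_def by (rule continuous_on_compose2[OF assms]) (auto intro!: continuous_intros)
  have "continuous (at u within {0..}) (\<lambda>u. integral {0..u} G)" if "u \<in> {0..}" for u
    using integral_has_vector_derivative_atLeast[OF G] that by (auto intro: has_vector_derivative_continuous)
  then have "continuous_on {0..} (\<lambda>u. exp (- c * u) *\<^sub>R (z + integral {0..u} G))"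
    by (intro continuous_intros) (simp add: continuous_on_eq_continuous_within)
  then show ?thesis
    unfolding bielecki_picard_def G_def[symmetric]
    by (rule continuous_on_compose2[of _ _ UNIV "\<lambda>t. max t 0"]) (auto intro!: continuous_intros)
qed

lemma
  fixes F :: "'a::banach \<Rightarrow> 'a"
  assumes lip: "L-lipschitz_on UNIV F" and L: "L > 0"
  shows norm_bielecki_picard_le:
      "norm (bielecki_picard (2 * L) F z y t) \<le> norm z + (norm (F 0) + L * norm y) / (2 * L)"
    and dist_bielecki_picard_le:
      "dist (bielecki_picard (2 * L) F z y t) (bielecki_picard (2 * L) F z y' t) \<le> dist y y' / 2"
proof -
  define u where "u = max t 0"
  have u: "u \<ge> 0" by (simp add: u_def)
  define G where "G y s = F (exp (2 * L * s) *\<^sub>R apply_bcontfun y s)" for y s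
  have G_integrable: "G y integrable_on {0..u}" for y
    unfolding G_def
    by (intro integrable_continuous_interval continuous_on_compose2[OF lipschitz_on_continuous_on[OF lip]])
      (auto intro!: continuous_intros)
  have G_diff: "norm (G y s - G y' s) \<le> L * dist y y' * exp (2 * L * s)" for y y' s
    unfolding G_def by (rule lipschitz_scaleR_bcontfun_diff_le[OF lip])
  have "exp (- (2 * L) * u) * norm (integral {0..u} (G y)) \<le> (norm (F 0) + L * norm y) / (2 * L)"
  proof (rule exp_weighted_norm_integral_le)
    fix s
    have "norm (G y s) \<le> norm (F 0) + norm (G y s - G 0 s)"
      by (simp add: G_def norm_triangle_sub)
    then show "norm (G y s) \<le> norm (F 0) + L * norm y * exp (2 * L * s)"
      using G_diff[of y s 0] by (simp add: dist_norm)
  qed (use L u G_integrable in auto)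
  moreover have "exp (- (2 * L) * u) * norm z \<le> norm z"
    using L u by (simp add: mult_left_le_one_le)
  moreover have "norm (bielecki_picard (2 * L) F z y t)
      \<le> exp (- (2 * L) * u) * norm z + exp (- (2 * L) * u) * norm (integral {0..u} (G y))"
    unfolding bielecki_picard_def u_def[symmetric] G_def[symmetric]
    using norm_triangle_ineq[of z "integral {0..u} (G y)"] by (simp add: mult_left_mono flip: distrib_left)
  ultimately show "norm (bielecki_picard (2 * L) F z y t) \<le> norm z + (norm (F 0) + L * norm y) / (2 * L)"
    by linarith
  have "exp (- (2 * L) * u) * norm (integral {0..u} (\<lambda>s. G y s - G y' s)) \<le> (0 + L * dist y y') / (2 * L)"
    by (rule exp_weighted_norm_integral_le) (use L u G_diff in \<open>auto intro: integrable_diff G_integrable\<close>)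
  then show "dist (bielecki_picard (2 * L) F z y t) (bielecki_picard (2 * L) F z y' t) \<le> dist y y' / 2"
    unfolding bielecki_picard_def u_def[symmetric] G_def[symmetric]
    using L by (simp add: dist_norm integral_diff[OF G_integrable G_integrable] flip: scaleR_diff_right)
qed

lemma bielecki_picard_fixpoint_solution:
  fixes F :: "'a::banach \<Rightarrow> 'a"
  assumes F: "continuous_on UNIV F" and fixpoint: "bielecki_picard c F z y = apply_bcontfun y"
  defines "\<zeta> \<equiv> \<lambda>t. exp (c * t) *\<^sub>R apply_bcontfun y t"
  shows "\<zeta> 0 = z" and "\<forall>t\<ge>0. (\<zeta> has_vector_derivative F (\<zeta> t)) (at t within {0..})"
proof -
  define I where "I u = integral {0..u} (\<lambda>s. F (\<zeta> s))" for u
  have \<zeta>_eq: "\<zeta> t = z + I t" if "t \<ge> 0" for t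
  proof -
    have "apply_bcontfun y t = exp (- c * t) *\<^sub>R (z + I t)"
      using fun_cong[OF fixpoint, of t] that by (simp add: bielecki_picard_def \<zeta>_def I_def)
    then show ?thesis by (simp add: \<zeta>_def exp_minus)
  qed
  then show "\<zeta> 0 = z" by (simp add: I_def)
  have "continuous_on {0..} (\<lambda>s. F (\<zeta> s))"
    unfolding \<zeta>_def by (rule continuous_on_compose2[OF F]) (auto intro!: continuous_intros)
  then have I': "(I has_vector_derivative F (\<zeta> t)) (at t within {0..})" if "t \<ge> 0" for t
    unfolding I_def using that by (rule integral_has_vector_derivative_atLeast)
  show "\<forall>t\<ge>0. (\<zeta> has_vector_derivative F (\<zeta> t)) (at t within {0..})"
  proof (intro allI impI)
    fix t :: real assume t: "t \<ge> 0"
    have "((\<lambda>t. z + I t) has_vector_derivative F (\<zeta> t)) (at t within {0..})"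
      using I'[OF t] by (auto intro!: derivative_eq_intros)
    then show "(\<zeta> has_vector_derivative F (\<zeta> t)) (at t within {0..})"
      by (rule has_vector_derivative_transform_within[OF _ zero_less_one]) (use t \<zeta>_eq in auto)
  qed
qed

lemma lipschitz_ode_global_solution:
  fixes F :: "'a::banach \<Rightarrow> 'a"
  assumes lip: "L-lipschitz_on UNIV F"
  obtains \<zeta> where "\<zeta> 0 = z" and "\<forall>t\<ge>0. (\<zeta> has_vector_derivative F (\<zeta> t)) (at t within {0..})"
proof -
  obtain K where K: "K > 0" and lip': "K-lipschitz_on UNIV F"
  proof
    show "(L + 1)-lipschitz_on UNIV F"
      by (rule lipschitz_on_mono[OF lip]) auto
  qed (use lipschitz_on_nonneg[OF lip] in auto)
  define P where "P y = Bcontfun (bielecki_picard (2 * K) F z y)" for y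
  have P: "apply_bcontfun (P y) = bielecki_picard (2 * K) F z y" for y
    unfolding P_def using norm_bielecki_picard_le[OF lip' K]
    by (intro Bcontfun_inverse bcontfun_normI continuous_on_bielecki_picard
        lipschitz_on_continuous_on[OF lip])
  have "dist (P y) (P y') \<le> dist y y' / 2" for y y'
    by (rule dist_bound) (unfold P, rule dist_bielecki_picard_le[OF lip' K])
  then have "\<exists>!y. P y = y"
    by (intro banach_fix_type[of "1 / 2"]) auto
  then obtain y where "P y = y"
    by blast
  then have "bielecki_picard (2 * K) F z y = apply_bcontfun y"
    using P[of y] by simp
  from bielecki_picard_fixpoint_solution[OF lipschitz_on_continuous_on[OF lip] this]
  show ?thesis by (rule that)
qed

lemma exp_stable_perturbed_solution_estimate:
  fixes F :: "'a::banach \<Rightarrow> 'a" and G \<eta> :: "real \<Rightarrow> 'a"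
  assumes lip: "L-lipschitz_on UNIV F" and L: "L > 0"
    and stable: "\<And>\<zeta>. \<forall>t\<ge>0. (\<zeta> has_vector_derivative F (\<zeta> t)) (at t within {0..}) \<Longrightarrow>
        \<forall>t\<ge>0. norm (\<zeta> t - p) \<le> M * exp (- k * t) * norm (\<zeta> 0 - p)"
    and \<eta>: "\<forall>t\<ge>0. (\<eta> has_vector_derivative G t) (at t within {0..})"
    and t0: "t0 \<ge> 0"
    and perturbation: "\<And>t. t \<ge> t0 \<Longrightarrow> norm (G t - F (\<eta> t)) \<le> D"
    and s: "s \<in> {0..T}"
  shows "norm (\<eta> (t0 + s) - p) \<le> M * exp (- k * s) * norm (\<eta> t0 - p) + D / L * exp (2 * L * T)"
proof -
  obtain \<zeta> where \<zeta>0: "\<zeta> 0 = \<eta> t0" and \<zeta>: "\<forall>t\<ge>0. (\<zeta> has_vector_derivative F (\<zeta> t)) (at t within {0..})"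
    using lipschitz_ode_global_solution[OF lip] by metis
  define e where "e s = \<eta> (t0 + s) - \<zeta> s" for s
  have "norm (e s) \<le> D / L * exp (2 * L * T)"
  proof (rule gronwall_norm_le[OF L _ _ _ s])
    show "e 0 = 0" by (simp add: e_def \<zeta>0)
    fix x assume x: "x \<in> {0..T}"
    have "(\<eta> has_vector_derivative G (t0 + x)) (at (t0 + x) within (\<lambda>x. t0 + x) ` {0..})"
      by (rule has_vector_derivative_within_subset[of _ _ _ "{0..}"]) (use \<eta> t0 x in auto)
    then have "((\<lambda>x. \<eta> (t0 + x)) has_vector_derivative G (t0 + x)) (at x within {0..})"
      by (rule has_vector_derivative_shift_within)
    then have "(e has_vector_derivative G (t0 + x) - F (\<zeta> x)) (at x within {0..})"
      unfolding e_def using \<zeta> x by (intro has_vector_derivative_diff) auto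
    then show "(e has_vector_derivative G (t0 + x) - F (\<zeta> x)) (at x within {0..T})"
      by (rule has_vector_derivative_within_subset) auto
    have "norm (G (t0 + x) - F (\<zeta> x))
        \<le> norm (G (t0 + x) - F (\<eta> (t0 + x))) + norm (F (\<eta> (t0 + x)) - F (\<zeta> x))"
      using norm_triangle_ineq[of "G (t0 + x) - F (\<eta> (t0 + x))" "F (\<eta> (t0 + x)) - F (\<zeta> x)"]
      by simp
    also have "\<dots> \<le> D + L * norm (e x)"
      using perturbation[of "t0 + x"] lipschitz_onD[OF lip, of "\<eta> (t0 + x)" "\<zeta> x"] x
      by (auto simp: e_def dist_norm intro!: add_mono)
    finally show "norm (G (t0 + x) - F (\<zeta> x)) \<le> L * norm (e x) + D"
      by simp
  qed
  moreover have "norm (\<zeta> s - p) \<le> M * exp (- k * s) * norm (\<eta> t0 - p)"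
    using stable[OF \<zeta>] s \<zeta>0 by auto
  moreover have "norm (\<eta> (t0 + s) - p) \<le> norm (\<zeta> s - p) + norm (e s)"
    using norm_triangle_ineq[of "\<zeta> s - p" "e s"] by (simp add: e_def)
  ultimately show ?thesis
    by linarith
qed

lemma halving_recurrence_le:
  fixes a :: "nat \<Rightarrow> real"
  assumes "b \<ge> 0" and "\<And>n. a (Suc n) \<le> a n / 2 + b"
  shows "a n \<le> a 0 / 2 ^ n + 2 * b"
proof (induction n)
  case (Suc n)
  have "a (Suc n) \<le> a n / 2 + b"
    by (rule assms(2))
  also have "\<dots> \<le> (a 0 / 2 ^ n + 2 * b) / 2 + b"
    using Suc.IH by simp
  also have "\<dots> = a 0 / 2 ^ Suc n + 2 * b"
    by (simp add: field_simps)
  finally show ?case .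
qed (use assms(1) in simp)

lemma floor_multiple_decomposition:
  fixes T t :: real
  assumes T: "T > 0" and t: "real N * T \<le> t"
  obtains n where "N \<le> n" and "t - real n * T \<in> {0..T}"
proof
  define n where "n = nat \<lfloor>t / T\<rfloor>"
  have "real N \<le> t / T"
    using t T by (simp add: field_simps)
  then have n: "N \<le> n" "real n \<le> t / T" "t / T < real n + 1"
    unfolding n_def by linarith+
  then show "N \<le> n"
    by simp
  show "t - real n * T \<in> {0..T}"
    using n(2,3) T by (simp add: field_simps)
qed

lemma tendsto_zero_of_window_contraction:
  fixes V \<delta> :: "real \<Rightarrow> real"
  assumes T: "T > 0" and M: "M \<ge> 0" and K: "K \<ge> 0" and V: "\<And>t. V t \<ge> 0"
    and \<delta>: "(\<delta> \<longlongrightarrow> 0) at_top"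
    and window: "\<And>t0 D s. t0 \<ge> 0 \<Longrightarrow> (\<And>t. t \<ge> t0 \<Longrightarrow> \<delta> t \<le> D) \<Longrightarrow> s \<in> {0..T} \<Longrightarrow>
        V (t0 + s) \<le> M * V t0 + K * D"
    and contraction: "\<And>t0 D. t0 \<ge> 0 \<Longrightarrow> (\<And>t. t \<ge> t0 \<Longrightarrow> \<delta> t \<le> D) \<Longrightarrow>
        V (t0 + T) \<le> V t0 / 2 + K * D"
  shows "(V \<longlongrightarrow> 0) at_top"
proof (rule tendstoI)
  fix \<epsilon> :: real assume \<epsilon>: "\<epsilon> > 0"
  define X where "X = M * (1 + 2 * K) + K"
  have X: "X \<ge> 0"
    using M K by (simp add: X_def)
  define \<epsilon>' where "\<epsilon>' = \<epsilon> / (X + 1)"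
  have \<epsilon>': "\<epsilon>' > 0" and \<epsilon>'_le: "X * \<epsilon>' < \<epsilon>"
    using \<epsilon> X by (simp_all add: \<epsilon>'_def field_simps)
  obtain t1 where t1: "t1 \<ge> 0" and \<delta>_le: "\<And>t. t \<ge> t1 \<Longrightarrow> \<delta> t \<le> \<epsilon>'"
    using order_tendstoD(2)[OF \<delta> \<epsilon>'] unfolding eventually_at_top_linorder
    by (metis less_imp_le max.cobounded1 max.cobounded2 order_trans)
  define a where "a n = V (t1 + real n * T)" for n
  have start_ge: "t1 + real n * T \<ge> t1" for n
    using T by simp
  have "a (Suc n) \<le> a n / 2 + K * \<epsilon>'" for n
    using contraction[of "t1 + real n * T" \<epsilon>'] start_ge[of n] t1 \<delta>_le
    by (simp add: a_def algebra_simps)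
  then have a_le: "a n \<le> a 0 / 2 ^ n + 2 * (K * \<epsilon>')" for n
    using K \<epsilon>' by (intro halving_recurrence_le) auto
  obtain N where N: "\<And>n. n \<ge> N \<Longrightarrow> a 0 / 2 ^ n < \<epsilon>'"
    using order_tendstoD(2)[OF LIMSEQ_divide_realpow_zero[of 2 "a 0"] \<epsilon>']
    unfolding eventually_sequentially by auto
  show "\<forall>\<^sub>F t in at_top. dist (V t) 0 < \<epsilon>"
    unfolding eventually_at_top_linorder
  proof (intro exI allI impI)
    fix t assume "t \<ge> t1 + real N * T"
    then obtain n where n: "N \<le> n" and s: "t - (t1 + real n * T) \<in> {0..T}"
      using floor_multiple_decomposition[OF T, of N "t - t1"] by (auto simp: algebra_simps)
    have "V t \<le> M * a n + K * \<epsilon>'"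
      using window[of "t1 + real n * T" \<epsilon>' "t - (t1 + real n * T)"] s t1 start_ge[of n] \<delta>_le by (simp add: a_def)
    also have "\<dots> \<le> M * (\<epsilon>' + 2 * (K * \<epsilon>')) + K * \<epsilon>'"
      using a_le[of n] N[OF n] M K by (intro add_mono mult_left_mono) auto
    also have "\<dots> < \<epsilon>"
      using \<epsilon>'_le by (simp add: X_def algebra_simps)
    finally show "dist (V t) 0 < \<epsilon>"
      using V[of t] by simp
  qed
qed

lemma glob_exp_stable_eqI:
  assumes "F p = 0" and "M > 0" and "k > 0"
    and "\<And>\<zeta> t. \<forall>t\<ge>0. (\<zeta> has_vector_derivative F (\<zeta> t)) (at t within {0..}) \<Longrightarrow> t \<ge> 0 \<Longrightarrow>
        norm (\<zeta> t - p) \<le> M * exp (- k * t) * norm (\<zeta> 0 - p)"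
  shows "glob_exp_stable_eq F p"
  unfolding glob_exp_stable_eq_def using assms by blast

lemma glob_exp_stable_eq_converging_input:
  fixes F :: "'a::banach \<Rightarrow> 'a" and G \<eta> :: "real \<Rightarrow> 'a"
  assumes lip: "L-lipschitz_on UNIV F" and stable: "glob_exp_stable_eq F p"
    and \<eta>: "\<forall>t\<ge>0. (\<eta> has_vector_derivative G t) (at t within {0..})"
    and perturbation: "((\<lambda>t. norm (G t - F (\<eta> t))) \<longlongrightarrow> 0) at_top"
  shows "(\<eta> \<longlongrightarrow> p) at_top"
proof -
  obtain M k where M: "M > 0" and k: "k > 0" and decay:
    "\<And>\<zeta>. \<forall>t\<ge>0. (\<zeta> has_vector_derivative F (\<zeta> t)) (at t within {0..}) \<Longrightarrow>
        \<forall>t\<ge>0. norm (\<zeta> t - p) \<le> M * exp (- k * t) * norm (\<zeta> 0 - p)"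
    using stable unfolding glob_exp_stable_eq_def by blast
  have lip': "(L + 1)-lipschitz_on UNIV F" and L': "L + 1 > 0"
    using lipschitz_on_mono[OF lip] lipschitz_on_nonneg[OF lip] by auto
  define T where "T = max 1 (ln (2 * M) / k)"
  have T: "T > 0"
    by (simp add: T_def)
  have "ln (2 * M) / k \<le> T"
    by (simp add: T_def)
  then have "ln (2 * M) \<le> k * T"
    using k by (simp add: divide_le_eq mult.commute)
  then have "exp (ln (2 * M)) \<le> exp (k * T)"
    by simp
  then have "2 * M \<le> exp (k * T)"
    using M by simp
  then have MT: "M * exp (- k * T) \<le> 1 / 2"
    by (simp add: exp_minus field_simps)
  define K where "K = exp (2 * (L + 1) * T) / (L + 1)"
  have estimate: "norm (\<eta> (t0 + s) - p) \<le> M * exp (- k * s) * norm (\<eta> t0 - p) + K * D"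
    if "t0 \<ge> 0" "\<And>t. t \<ge> t0 \<Longrightarrow> norm (G t - F (\<eta> t)) \<le> D" "s \<in> {0..T}" for t0 D s
    using exp_stable_perturbed_solution_estimate[OF lip' L' decay \<eta> that] by (simp add: K_def mult.commute)
  have "((\<lambda>t. norm (\<eta> t - p)) \<longlongrightarrow> 0) at_top"
  proof (rule tendsto_zero_of_window_contraction[OF T _ _ _ perturbation])
    fix t0 D s assume t0: "t0 \<ge> 0" and D: "\<And>t. t \<ge> t0 \<Longrightarrow> norm (G t - F (\<eta> t)) \<le> D"
    have "M * exp (- k * T) * norm (\<eta> t0 - p) \<le> 1 / 2 * norm (\<eta> t0 - p)"
      by (rule mult_right_mono[OF MT]) simp
    then show "norm (\<eta> (t0 + T) - p) \<le> norm (\<eta> t0 - p) / 2 + K * D"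
      using estimate[OF t0 D, of T] T by simp
    assume s: "s \<in> {0..T}"
    have "M * exp (- k * s) \<le> M"
      using M k s by (intro mult_right_le_one_le) auto
    then have "M * exp (- k * s) * norm (\<eta> t0 - p) \<le> M * norm (\<eta> t0 - p)"
      by (rule mult_right_mono) simp
    then show "norm (\<eta> (t0 + s) - p) \<le> M * norm (\<eta> t0 - p) + K * D"
      using estimate[OF t0 D s] by simp
  qed (use M L' in \<open>auto simp: K_def\<close>)
  then show ?thesis
    by (simp add: tendsto_norm_zero_iff LIM_zero_iff)
qed

lemma glob_exp_stable_eq_linear:
  fixes p :: "'a::real_normed_vector"
  assumes c: "c > 0"
  shows "glob_exp_stable_eq (\<lambda>x. - c *\<^sub>R (x - p)) p"
proof -
  have decay: "norm (\<zeta> t - p) \<le> exp (- c * t) * norm (\<zeta> 0 - p)"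
    if \<zeta>: "\<forall>t\<ge>0. (\<zeta> has_vector_derivative - c *\<^sub>R (\<zeta> t - p)) (at t within {0..})"
      and t: "t \<ge> 0" for \<zeta> :: "real \<Rightarrow> 'a" and t
  proof -
    have "((\<lambda>t. exp (c * t) *\<^sub>R (\<zeta> t - p)) has_vector_derivative 0) (at s within {0..})"
      if "s \<in> {0..}" for s
      using \<zeta> that by (auto intro!: derivative_eq_intros simp: algebra_simps)
    then obtain w where w: "\<And>s. s \<in> {0..} \<Longrightarrow> exp (c * s) *\<^sub>R (\<zeta> s - p) = w"
      using has_vector_derivative_zero_constant[OF convex_real_interval(1)] by blast
    have "\<zeta> t - p = exp (- c * t) *\<^sub>R (exp (c * t) *\<^sub>R (\<zeta> t - p))"
      by (simp add: exp_minus)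
    also have "\<dots> = exp (- c * t) *\<^sub>R (\<zeta> 0 - p)"
      using w[of t] w[of 0] t by simp
    finally show ?thesis
      by simp
  qed
  then show ?thesis
    using c by (intro glob_exp_stable_eqI[where M = 1 and k = c]) auto
qed

lemma tendsto_stable_scalar_ode:
  fixes w v :: "real \<Rightarrow> real"
  assumes c: "c > 0"
    and w: "\<forall>t\<ge>0. (w has_real_derivative - c * w t + v t) (at t within {0..})"
    and v: "(v \<longlongrightarrow> l) at_top"
  shows "(w \<longlongrightarrow> l / c) at_top"
proof (rule glob_exp_stable_eq_converging_input)
  show "c-lipschitz_on UNIV (\<lambda>x. - c *\<^sub>R (x - l / c))"
    using c by (intro lipschitz_onI) (auto simp: dist_real_def abs_mult right_diff_distrib[symmetric])
  show "glob_exp_stable_eq (\<lambda>x. - c *\<^sub>R (x - l / c)) (l / c)"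
    by (rule glob_exp_stable_eq_linear[OF c])
  show "\<forall>t\<ge>0. (w has_vector_derivative - c * w t + v t) (at t within {0..})"
    using w by (simp add: has_real_derivative_iff_has_vector_derivative)
  have "((\<lambda>t. \<bar>v t - l\<bar>) \<longlongrightarrow> 0) at_top"
    using v by (simp add: tendsto_rabs_zero_iff LIM_zero_iff)
  then show "((\<lambda>t. norm (- c * w t + v t - - c *\<^sub>R (w t - l / c))) \<longlongrightarrow> 0) at_top"
    using c by (simp add: algebra_simps)
qed

lemma matvec_A_gamma:
  assumes "i < r"
  shows "matvec r (A_gamma r \<gamma>) v i = - \<gamma> i * v i + (if Suc i < r then v (Suc i) else 0)"
proof -
  have "matvec r (A_gamma r \<gamma>) v i
      = (\<Sum>j<r. (if j = i then - \<gamma> i * v j else 0) + (if j = Suc i then v j else 0))"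
    unfolding matvec_def A_gamma_def by (rule sum.cong) (use assms in auto)
  then show ?thesis
    using assms by (simp add: sum.distrib)
qed

lemma Gamma_vec_rec:
  assumes \<gamma>: "\<forall>i<r. \<gamma> i \<noteq> 0" and i: "i < r"
  shows "\<gamma> i * Gamma_vec r \<gamma> i = (if Suc i < r then Gamma_vec r \<gamma> (Suc i) else 0) + B_vec r i"
proof -
  define P where "P v \<longleftrightarrow>
      (\<forall>i<r. \<gamma> i * v i = (if Suc i < r then v (Suc i) else 0) + B_vec r i) \<and> (\<forall>i\<ge>r. v i = 0)"
    for v :: "nat \<Rightarrow> real"
  have Gamma_vec_eq: "Gamma_vec r \<gamma> = (THE v. P v)"
    unfolding Gamma_vec_def P_def by (rule arg_cong[where f = The]) (auto simp: fun_eq_iff matvec_A_gamma)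
  have witness: "P (\<lambda>i. if i < r then \<Prod>j\<in>{i..<r}. 1 / \<gamma> j else 0)"
    unfolding P_def
  proof (intro conjI allI impI)
    fix i assume i: "i < r"
    show "\<gamma> i * (if i < r then \<Prod>j\<in>{i..<r}. 1 / \<gamma> j else 0)
        = (if Suc i < r then (if Suc i < r then \<Prod>j\<in>{Suc i..<r}. 1 / \<gamma> j else 0) else 0) + B_vec r i"
    proof (cases "Suc i < r")
      case True
      then show ?thesis
        using i \<gamma> by (simp add: B_vec_def prod.atLeast_Suc_lessThan[OF i])
    next
      case False
      then have "i = r - 1" and "{i..<r} = {i}"
        using i by auto
      then show ?thesis
        using i \<gamma> False by (simp add: B_vec_def)
    qed
  qed simp
  have unique: "v = w" if "P v" and "P w" for v w
  proof -
    have agree: "v n = w n" if "n \<le> r" for n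
      using that
    proof (induction n rule: inc_induct)
      case (step n)
      then have "\<gamma> n * v n = \<gamma> n * w n"
        using \<open>P v\<close> \<open>P w\<close> by (simp add: P_def)
      then show ?case
        using \<gamma> step.hyps(2) by simp
    qed (use \<open>P v\<close> \<open>P w\<close> in \<open>simp add: P_def\<close>)
    show "v = w"
    proof
      fix n
      show "v n = w n"
        using agree[of n] \<open>P v\<close> \<open>P w\<close> unfolding P_def by (cases "n \<le> r") auto
    qed
  qed
  have "P (Gamma_vec r \<gamma>)"
    unfolding Gamma_vec_eq by (rule theI[where P = P, OF witness unique[OF _ witness]])
  then show ?thesis
    using i by (simp add: P_def)
qed

lemma A_gamma_cascade_tendsto:
  assumes \<gamma>: "\<forall>i<r. \<gamma> i > 0"
    and \<phi>: "\<forall>t\<ge>0. \<forall>i<r. ((\<lambda>s. \<phi> s i) has_real_derivative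
        (matvec r (A_gamma r \<gamma>) (\<phi> t) i + B_vec r i * \<mu>)) (at t within {0..})"
  shows "\<forall>i<r. ((\<lambda>t. \<phi> t i) \<longlongrightarrow> \<mu> * Gamma_vec r \<gamma> i) at_top"
proof -
  have \<gamma>_ne: "\<forall>i<r. \<gamma> i \<noteq> 0"
    using \<gamma> by force
  have "i < r \<longrightarrow> ((\<lambda>t. \<phi> t i) \<longlongrightarrow> \<mu> * Gamma_vec r \<gamma> i) at_top" if "i \<le> r" for i
    using that
  proof (induction i rule: inc_induct)
    case (step n)
    have n: "n < r" and \<gamma>n: "\<gamma> n > 0"
      using step.hyps \<gamma> by auto
    have "\<forall>t\<ge>0. ((\<lambda>s. \<phi> s n) has_real_derivative
        - \<gamma> n * \<phi> t n + ((if Suc n < r then \<phi> t (Suc n) else 0) + B_vec r n * \<mu>)) (at t within {0..})"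
      using \<phi>[rule_format, OF _ n] by (simp only: matvec_A_gamma[OF n] add.assoc) blast
    moreover have "((\<lambda>t. (if Suc n < r then \<phi> t (Suc n) else 0) + B_vec r n * \<mu>)
        \<longlongrightarrow> (if Suc n < r then \<mu> * Gamma_vec r \<gamma> (Suc n) else 0) + B_vec r n * \<mu>) at_top"
      using step.IH by (auto intro!: tendsto_intros)
    ultimately have "((\<lambda>t. \<phi> t n) \<longlongrightarrow>
        ((if Suc n < r then \<mu> * Gamma_vec r \<gamma> (Suc n) else 0) + B_vec r n * \<mu>) / \<gamma> n) at_top"
      by (rule tendsto_stable_scalar_ode[OF \<gamma>n])
    moreover have "((if Suc n < r then \<mu> * Gamma_vec r \<gamma> (Suc n) else 0) + B_vec r n * \<mu>) / \<gamma> n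
        = \<mu> * Gamma_vec r \<gamma> n"
      using Gamma_vec_rec[OF \<gamma>_ne n] \<gamma>n by (cases "Suc n < r") (simp_all add: field_simps)
    ultimately show ?case
      by simp
  qed simp
  then show ?thesis
    by auto
qed

lemma lipschitz_cbfE:
  assumes "lipschitz_cbf r q"
  obtains L where "L \<ge> 0"
    and "\<And>\<eta> \<eta>' \<phi> \<phi>'. norm (q \<eta> \<phi> - q \<eta>' \<phi>') \<le> L * (norm (\<eta> - \<eta>') + dist_r r \<phi> \<phi>')"
proof -
  obtain L where L: "\<And>\<eta> \<eta>' \<phi> \<phi>'. norm (q \<eta> \<phi> - q \<eta>' \<phi>') \<le> L * (norm (\<eta> - \<eta>') + dist_r r \<phi> \<phi>')"
    using assms unfolding lipschitz_cbf_def by blast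
  have "L * (norm (\<eta> - \<eta>') + dist_r r \<phi> \<phi>') \<le> max L 0 * (norm (\<eta> - \<eta>') + dist_r r \<phi> \<phi>')"
    for \<eta> \<eta>' \<phi> \<phi>'
    by (intro mult_right_mono add_nonneg_nonneg) (auto simp: dist_r_def intro!: sum_nonneg)
  then show ?thesis
    using L that[of "max L 0"] by (meson max.cobounded2 order_trans)
qed

lemma tendsto_dist_r:
  assumes "\<forall>i<r. ((\<lambda>t. \<phi> t i) \<longlongrightarrow> \<Phi> i) F"
  shows "((\<lambda>t. dist_r r (\<phi> t) \<Phi>) \<longlongrightarrow> 0) F"
proof -
  have "((\<lambda>t. sqrt (\<Sum>i<r. (\<phi> t i - \<Phi> i)\<^sup>2)) \<longlongrightarrow> sqrt (\<Sum>i<r. (\<Phi> i - \<Phi> i)\<^sup>2)) F"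
    using assms by (intro tendsto_intros) auto
  then show ?thesis
    by (simp add: dist_r_def)
qed

theorem theorem5:
  fixes r :: nat and \<gamma> :: "nat \<Rightarrow> real" and \<mu>e :: real
    and q :: "'e::euclidean_space \<Rightarrow> (nat \<Rightarrow> real) \<Rightarrow> 'e"
    and \<phi> :: "real \<Rightarrow> nat \<Rightarrow> real" and \<eta> :: "real \<Rightarrow> 'e" and \<eta>e :: 'e
  assumes r_pos: "r \<ge> 1"
    and gamma_pos: "\<forall>i<r. \<gamma> i > 0"
    and q_lip: "lipschitz_cbf r q"
    and x0_in_S: "\<forall>i<r. \<phi> 0 i \<ge> 0"
    and mu_nonneg: "\<mu>e \<ge> 0"
    and min_phase: "glob_exp_stable_eq (\<lambda>z. q z (scale_r \<mu>e (Gamma_vec r \<gamma>))) \<eta>e"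
    and phi_ode: "\<forall>t\<ge>0. \<forall>i<r. ((\<lambda>s. \<phi> s i) has_real_derivative
          (matvec r (A_gamma r \<gamma>) (\<phi> t) i + B_vec r i * \<mu>e)) (at t within {0..})"
    and eta_ode: "\<forall>t\<ge>0. (\<eta> has_vector_derivative q (\<eta> t) (\<phi> t)) (at t within {0..})"
  shows "(\<forall>i<r. ((\<lambda>t. \<phi> t i) \<longlongrightarrow> \<mu>e * Gamma_vec r \<gamma> i) at_top)
         \<and> (\<eta> \<longlongrightarrow> \<eta>e) at_top"
proof
  \<comment> \<open>Convergence does not need \<open>r_pos\<close>, \<open>x0_in_S\<close> or \<open>mu_nonneg\<close>.\<close>
  define \<Phi> where "\<Phi> = scale_r \<mu>e (Gamma_vec r \<gamma>)"
  show \<phi>_lim: "\<forall>i<r. ((\<lambda>t. \<phi> t i) \<longlongrightarrow> \<mu>e * Gamma_vec r \<gamma> i) at_top"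
    using A_gamma_cascade_tendsto[OF gamma_pos phi_ode] .
  obtain L where L: "L \<ge> 0"
    and q_L: "\<And>\<eta> \<eta>' \<phi> \<phi>'. norm (q \<eta> \<phi> - q \<eta>' \<phi>') \<le> L * (norm (\<eta> - \<eta>') + dist_r r \<phi> \<phi>')"
    using lipschitz_cbfE[OF q_lip] by blast
  have "L-lipschitz_on UNIV (\<lambda>z. q z \<Phi>)"
    using L q_L[of _ \<Phi> _ \<Phi>] by (intro lipschitz_onI) (auto simp: dist_norm dist_r_def)
  moreover have "((\<lambda>t. norm (q (\<eta> t) (\<phi> t) - q (\<eta> t) \<Phi>)) \<longlongrightarrow> 0) at_top"
  proof (rule Lim_null_comparison)
    show "\<forall>\<^sub>F t in at_top. norm (norm (q (\<eta> t) (\<phi> t) - q (\<eta> t) \<Phi>)) \<le> L * dist_r r (\<phi> t) \<Phi>"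
      using q_L[of "\<eta> t" "\<phi> t" "\<eta> t" \<Phi> for t] by simp
    show "((\<lambda>t. L * dist_r r (\<phi> t) \<Phi>) \<longlongrightarrow> 0) at_top"
      using tendsto_mult_right_zero[OF tendsto_dist_r] \<phi>_lim by (simp add: \<Phi>_def scale_r_def)
  qed
  ultimately show "(\<eta> \<longlongrightarrow> \<eta>e) at_top"
    unfolding \<Phi>_def by (rule glob_exp_stable_eq_converging_input[OF _ min_phase eta_ode])
qed

end
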